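(* Let $T_0$ be an unrooted binary phylogenetic tree on $n$ leaves. There is an NNI-walk of length $O(n^2)$ that visits every tree of the SPR neighborhood $N_{SPR}(T_0)$. *)

theory Defs
  imports Main
begin

text \<open>Leaves of a phylogenetic X-tree are
  identified with the labels in X (X is the leaf set; labels = leaf vertices).\<close>

type_synonym graph = "nat set \<times> nat set set"

definition adj :: "nat set set \<Rightarrow> (nat \<times> nat) set" where
  "adj E = {(a, b). {a, b} \<in> E}"

definition degree :: "nat set set \<Rightarrow> nat \<Rightarrow> nat" where
  "degree E v = card {w. {v, w} \<in> E}"

definition is_tree :: "graph \<Rightarrow> bool" where
  "is_tree T \<longleftrightarrow> (case T of (V, E) \<Rightarrow>
     finite V \<and>
     (\<forall>e\<in>E. \<exists>a b. a \<noteq> b \<and> a \<in> V \<and> b \<in> V \<and> e = {a, b}) \<and>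
     (\<forall>a\<in>V. \<forall>b\<in>V. (a, b) \<in> (adj E)\<^sup>*) \<and>
     (\<forall>e\<in>E. \<forall>a b. e = {a, b} \<longrightarrow> (a, b) \<notin> (adj (E - {e}))\<^sup>*))"

definition phylo_tree :: "nat set \<Rightarrow> graph \<Rightarrow> bool" where
  "phylo_tree X T \<longleftrightarrow> (case T of (V, E) \<Rightarrow>
     is_tree (V, E) \<and> X \<subseteq> V \<and>
     (\<forall>v\<in>V. v \<in> X \<longleftrightarrow> degree E v = 1) \<and>
     (\<forall>v\<in>V - X. degree E v = 3))"

definition tree_iso :: "nat set \<Rightarrow> graph \<Rightarrow> graph \<Rightarrow> bool" where
  "tree_iso X T T' \<longleftrightarrow> (case T of (V, E) \<Rightarrow> case T' of (V', E') \<Rightarrow>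
     (\<exists>f. bij_betw f V V' \<and> (\<forall>x\<in>X. f x = x) \<and>
          (\<forall>a\<in>V. \<forall>b\<in>V. {a, b} \<in> E \<longleftrightarrow> {f a, f b} \<in> E')))"

text \<open>Concrete NNI move across the internal edge {u,v}: u has neighbours v, a (and b),
  v has neighbours u, c (and d); the subtrees at a and c are swapped.\<close>
definition nni_move :: "nat set \<Rightarrow> graph \<Rightarrow> graph \<Rightarrow> bool" where
  "nni_move X T T' \<longleftrightarrow> (case T of (V, E) \<Rightarrow> case T' of (V', E') \<Rightarrow>
     (\<exists>u v a c. {u, v} \<in> E \<and> u \<notin> X \<and> v \<notin> X \<and>
        {u, a} \<in> E \<and> a \<noteq> v \<and> {v, c} \<in> E \<and> c \<noteq> u \<and>
        V' = V \<and> E' = (E - {{u, a}, {v, c}}) \<union> {{v, a}, {u, c}}))"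

definition nni :: "nat set \<Rightarrow> graph \<Rightarrow> graph \<Rightarrow> bool" where
  "nni X T T' \<longleftrightarrow> phylo_tree X T \<and> phylo_tree X T' \<and>
     (\<exists>T''. nni_move X T T'' \<and> tree_iso X T'' T')"

text \<open>Concrete SPR move: cut the edge {u,v} (u internal), pruning the subtree S
  containing v; suppress the now degree-2 vertex u (whose other neighbours are p, q)
  by replacing the path p-u-q with the edge {p,q}; then regraft by subdividing an edge
  {x,y} of the remaining tree with u and re-adding the edge {u,v}.\<close>
definition spr_move :: "nat set \<Rightarrow> graph \<Rightarrow> graph \<Rightarrow> bool" where
  "spr_move X T T' \<longleftrightarrow> (case T of (V, E) \<Rightarrow> case T' of (V', E') \<Rightarrow>
     (\<exists>u v p q x y. {u, v} \<in> E \<and> u \<notin> X \<and>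
        {u, p} \<in> E \<and> {u, q} \<in> E \<and> p \<noteq> q \<and> p \<noteq> v \<and> q \<noteq> v \<and>
        (let S = {w. (v, w) \<in> (adj (E - {{u, v}}))\<^sup>*};
             ER = ({e \<in> E. e \<inter> S = {}} - {{u, p}, {u, q}}) \<union> {{p, q}}
         in {x, y} \<in> ER \<and> V' = V \<and>
            E' = {e \<in> E. e \<subseteq> S} \<union> (ER - {{x, y}}) \<union> {{x, u}, {u, y}, {u, v}})))"

definition spr :: "nat set \<Rightarrow> graph \<Rightarrow> graph \<Rightarrow> bool" where
  "spr X T T' \<longleftrightarrow> phylo_tree X T \<and> phylo_tree X T' \<and>
     (\<exists>T''. spr_move X T T'' \<and> tree_iso X T'' T')"

text \<open>An NNI-walk: a nonempty list of phylogenetic X-trees, consecutive ones related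
  by an NNI move. Its length is the number of moves, length ws - 1.\<close>
definition nni_walk :: "nat set \<Rightarrow> graph list \<Rightarrow> bool" where
  "nni_walk X ws \<longleftrightarrow> ws \<noteq> [] \<and> (\<forall>T\<in>set ws. phylo_tree X T) \<and>
     (\<forall>i. Suc i < length ws \<longrightarrow> nni X (ws ! i) (ws ! Suc i))"

end

theory Submission
  imports Defs
begin

text \<open>
  An SPR move cuts an edge \<open>{u, v}\<close> at an internal vertex \<open>u\<close>, suppresses \<open>u\<close>
  (joining its other neighbours \<open>p, q\<close> by a new edge) and regrafts the pruned subtree by
  subdividing an edge \<open>e\<close> of the remaining tree with \<open>u\<close>.  For a fixed cut edge,
  regrafting onto two edges \<open>{x, y}\<close>, \<open>{y, z}\<close> sharing a vertex gives trees that differ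
  by a single NNI move across \<open>{u, y}\<close>, and regrafting onto \<open>{p, q}\<close> gives back \<open>T\<close>.
  So walking the regraft point along a closed walk through all edges of the remaining tree
  (which exists with at most twice as many steps as edges) yields a closed NNI tour at \<open>T\<close>
  of length \<open>O(n)\<close> meeting every SPR neighbour with this cut edge.  Concatenating these
  tours over the \<open>O(n)\<close> possible cut edges and removing repetitions gives the walk.
\<close>

section \<open>Reachability in edge sets\<close>

lemma adj_iff [simp]: "(a, b) \<in> adj E \<longleftrightarrow> {a, b} \<in> E"
  by (simp add: adj_def)

lemma adj_sym: "(a, b) \<in> (adj E)\<^sup>* \<Longrightarrow> (b, a) \<in> (adj E)\<^sup>*"
proof (induction rule: rtrancl_induct)
  case (step y z)
  have "(z, y) \<in> adj E" using step(2) by (simp add: insert_commute)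
  then show ?case using step(3) by (rule converse_rtrancl_into_rtrancl)
qed simp

lemma adj_mono: "E \<subseteq> F \<Longrightarrow> (a, b) \<in> (adj E)\<^sup>* \<Longrightarrow> (a, b) \<in> (adj F)\<^sup>*"
  by (erule rtrancl_mono[THEN subsetD, rotated]) (auto simp: adj_def)

lemma adj_edge: "{a, b} \<in> E \<Longrightarrow> (a, b) \<in> (adj E)\<^sup>*"
  by (simp add: r_into_rtrancl)

lemma bridge_sym:
  assumes "(s, t) \<notin> (adj (F - {{s, t}}))\<^sup>*" and "{x, y} = {s, t}"
  shows "(x, y) \<notin> (adj (F - {{x, y}}))\<^sup>*"
  using assms adj_sym by (metis doubleton_eq_iff)

definition reach :: "nat set set \<Rightarrow> nat \<Rightarrow> nat set" where
  "reach F x = {w. (x, w) \<in> (adj F)\<^sup>*}"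

lemma reach_refl: "r \<in> reach F r"
  unfolding reach_def by simp

lemma reach_closed: "{s, t} \<in> F \<Longrightarrow> s \<in> reach F x \<longleftrightarrow> t \<in> reach F x"
proof -
  assume st: "{s, t} \<in> F"
  have "(s, t) \<in> adj F" "(t, s) \<in> adj F" using st by (auto simp: insert_commute)
  then show ?thesis unfolding reach_def by (auto intro: rtrancl_into_rtrancl)
qed

lemma reach_step: "s \<in> reach F x \<Longrightarrow> {s, t} \<in> F \<Longrightarrow> t \<in> reach F x"
  using reach_closed by blast

lemma reach_trans: "x \<in> reach F r \<Longrightarrow> y \<in> reach F x \<Longrightarrow> y \<in> reach F r"
  unfolding reach_def by (auto intro: rtrancl_trans)

lemma reach_sym: "x \<in> reach F r \<Longrightarrow> r \<in> reach F x"
  unfolding reach_def by (simp add: adj_sym)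

lemma reach_mono: "F \<subseteq> G \<Longrightarrow> x \<in> reach F r \<Longrightarrow> x \<in> reach G r"
  unfolding reach_def using adj_mono by blast

text \<open>A set of vertices that no edge of \<open>F\<close> leaves, i.e.\ a union of components of \<open>F\<close>.
  Such sets are the main tool for showing that two vertices are \<^emph>\<open>not\<close> connected.\<close>
definition comp_closed :: "nat set set \<Rightarrow> nat set \<Rightarrow> bool" where
  "comp_closed F A \<longleftrightarrow> (\<forall>s t. {s, t} \<in> F \<longrightarrow> (s \<in> A \<longleftrightarrow> t \<in> A))"

lemma path_leaves_set:
  "(x, y) \<in> (adj F)\<^sup>* \<Longrightarrow> x \<in> A \<Longrightarrow> y \<notin> A \<Longrightarrow> \<exists>a b. {a, b} \<in> F \<and> a \<in> A \<and> b \<notin> A"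
proof (induction rule: rtrancl_induct)
  case (step y z)
  then show ?case by (cases "y \<in> A") auto
qed simp

lemma comp_closed_separates:
  assumes "comp_closed F A" and "x \<in> A" and "y \<notin> A"
  shows "(x, y) \<notin> (adj F)\<^sup>*"
  using assms path_leaves_set unfolding comp_closed_def by blast

lemma phylo_facts:
  assumes "phylo_tree X (V, E)"
  shows "finite V" "\<And>e. e \<in> E \<Longrightarrow> \<exists>a b. a \<noteq> b \<and> a \<in> V \<and> b \<in> V \<and> e = {a, b}"
    "\<And>a b. a \<in> V \<Longrightarrow> b \<in> V \<Longrightarrow> (a, b) \<in> (adj E)\<^sup>*"
    "\<And>a b. {a, b} \<in> E \<Longrightarrow> (a, b) \<notin> (adj (E - {{a, b}}))\<^sup>*"
    "X \<subseteq> V" "\<And>v. v \<in> V \<Longrightarrow> v \<in> X \<longleftrightarrow> degree E v = 1"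
    "\<And>v. v \<in> V \<Longrightarrow> v \<notin> X \<Longrightarrow> degree E v = 3"
  using assms unfolding phylo_tree_def is_tree_def by auto

lemma edge_facts:
  assumes "phylo_tree X (V, E)" "{a, b} \<in> E"
  shows "a \<noteq> b" "a \<in> V" "b \<in> V"
proof -
  obtain x y where "x \<noteq> y" "x \<in> V" "y \<in> V" "{a, b} = {x, y}"
    using phylo_facts(2)[OF assms] by blast
  then show "a \<noteq> b" "a \<in> V" "b \<in> V" by (auto simp: doubleton_eq_iff)
qed

lemma nbr_finite: "phylo_tree X (V, E) \<Longrightarrow> finite {w. {z, w} \<in> E}"
proof -
  assume ph: "phylo_tree X (V, E)"
  have "{w. {z, w} \<in> E} \<subseteq> V" using edge_facts(3)[OF ph] by blast
  then show ?thesis using phylo_facts(1)[OF ph] finite_subset by blast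
qed

lemma two_nbrs_not_leaf:
  assumes ph: "phylo_tree X (V, E)" and "{y, a} \<in> E" "{y, b} \<in> E" "a \<noteq> b"
  shows "y \<notin> X"
proof -
  have "{a, b} \<subseteq> {w. {y, w} \<in> E}" using assms(2,3) by blast
  then have "card {a, b} \<le> degree E y"
    unfolding degree_def by (rule card_mono[OF nbr_finite[OF ph]])
  then have "degree E y \<noteq> 1" using assms(4) by simp
  then show ?thesis using phylo_facts(6)[OF ph] edge_facts(2)[OF ph assms(2)] by blast
qed

lemma finite_edges: "phylo_tree X (V, E) \<Longrightarrow> finite E"
proof -
  assume ph: "phylo_tree X (V, E)"
  have "E \<subseteq> Pow V" using phylo_facts(2)[OF ph] by blast
  then show ?thesis using phylo_facts(1)[OF ph] finite_subset by blast
qed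

section \<open>Size bounds: a phylogenetic tree on \<open>n\<close> leaves has at most \<open>2n\<close> vertices and edges\<close>

lemma edge_far_end:
  assumes ph: "phylo_tree X (V, E)" and r: "r \<in> V" and e: "e \<in> E"
  shows "\<exists>a b. e = {a, b} \<and> a \<noteq> b \<and> a \<in> V \<and> a \<notin> reach (E - {e}) r \<and> b \<in> reach (E - {e}) r"
proof -
  obtain a b where ab: "a \<noteq> b" "a \<in> V" "b \<in> V" "e = {a, b}" using phylo_facts(2)[OF ph e] by blast
  let ?R = "reach (E - {e}) r"
  have one_side: "a \<in> ?R \<or> b \<in> ?R"
  proof (rule ccontr)
    assume n: "\<not> (a \<in> ?R \<or> b \<in> ?R)"
    have "(r, a) \<in> (adj E)\<^sup>*" using phylo_facts(3)[OF ph r ab(2)] .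
    then obtain s t where st: "{s, t} \<in> E" "s \<in> ?R" "t \<notin> ?R"
      using path_leaves_set[of r a E ?R] n reach_refl by blast
    show False
    proof (cases "{s, t} = e")
      case True then show False using n st ab by (auto simp: doubleton_eq_iff)
    next
      case False then show False using st reach_step[of s "E - {e}" r t] by blast
    qed
  qed
  have not_both: "\<not> (a \<in> ?R \<and> b \<in> ?R)"
  proof
    assume "a \<in> ?R \<and> b \<in> ?R"
    then have "(r, a) \<in> (adj (E - {e}))\<^sup>*" "(r, b) \<in> (adj (E - {e}))\<^sup>*" unfolding reach_def by auto
    then have "(a, b) \<in> (adj (E - {e}))\<^sup>*" by (meson adj_sym rtrancl_trans)
    then show False using phylo_facts(4)[OF ph] e ab(4) by blast
  qed
  show ?thesis
  proof (cases "a \<in> ?R")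
    case True
    then have "e = {b, a} \<and> b \<noteq> a \<and> b \<in> V \<and> b \<notin> ?R \<and> a \<in> ?R"
      using not_both ab by (simp add: insert_commute)
    then show ?thesis by blast
  next
    case False
    then show ?thesis using one_side ab by blast
  qed
qed

lemma path_avoiding_vertex:
  "(r, y) \<in> (adj F)\<^sup>* \<Longrightarrow> a \<notin> reach F r \<Longrightarrow> (r, y) \<in> (adj (F - {f. a \<in> f}))\<^sup>*"
proof (induction rule: rtrancl_induct)
  case (step y z)
  have "(r, z) \<in> (adj F)\<^sup>*" using step(1,2) by (rule rtrancl_into_rtrancl)
  then have "y \<noteq> a" "z \<noteq> a" using step(1,4) unfolding reach_def by auto
  then have "(y, z) \<in> adj (F - {f. a \<in> f})" using step(2) by simp
  then show ?case using step by (meson rtrancl_into_rtrancl)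
qed simp

text \<open>Mapping each edge to its far endpoint is injective and misses the root, so a
  tree has fewer edges than vertices.\<close>
lemma tree_edges_le:
  assumes ph: "phylo_tree X (V, E)" and r: "r \<in> V"
  shows "card E \<le> card V - 1"
proof -
  define far where "far e = (SOME a. \<exists>b. e = {a, b} \<and> a \<noteq> b \<and> a \<in> V \<and>
      a \<notin> reach (E - {e}) r \<and> b \<in> reach (E - {e}) r)" for e
  have farP: "\<exists>b. e = {far e, b} \<and> far e \<noteq> b \<and> far e \<in> V \<and> far e \<notin> reach (E - {e}) r \<and>
      b \<in> reach (E - {e}) r" if "e \<in> E" for e
    unfolding far_def by (rule someI_ex) (rule edge_far_end[OF ph r that])
  have inj: "inj_on far E"
  proof (rule inj_onI, rule ccontr)
    fix e1 e2 assume e1: "e1 \<in> E" and e2: "e2 \<in> E" and eq: "far e1 = far e2" and ne: "e1 \<noteq> e2"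
    define a where "a = far e2"
    obtain b where b: "e2 = {a, b}" "a \<notin> reach (E - {e2}) r" "b \<in> reach (E - {e2}) r"
      using farP[OF e2] unfolding a_def by blast
    have a1: "a \<in> e1" "a \<notin> reach (E - {e1}) r" using farP[OF e1] eq unfolding a_def by auto
    text \<open>A path from \<open>r\<close> to \<open>b\<close> avoiding \<open>a\<close> does not use \<open>e1\<close>; adding \<open>e2\<close> reaches \<open>a\<close>.\<close>
    have "(r, b) \<in> (adj (E - {e2} - {f. a \<in> f}))\<^sup>*"
      using path_avoiding_vertex[of r b "E - {e2}" a] b unfolding reach_def by blast
    moreover have "E - {e2} - {f. a \<in> f} \<subseteq> E - {e1}" using a1 by auto
    ultimately have "b \<in> reach (E - {e1}) r" unfolding reach_def using adj_mono by blast
    moreover have "{b, a} \<in> E - {e1}" using b(1) e2 ne by (auto simp: insert_commute)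
    ultimately show False using a1 reach_step by blast
  qed
  have "far ` E \<subseteq> V - {r}"
  proof
    fix x assume "x \<in> far ` E"
    then obtain e where e: "e \<in> E" "x = far e" by blast
    then show "x \<in> V - {r}" using farP[OF e(1)] reach_refl[of r "E - {e}"] by auto
  qed
  then have "card E \<le> card (V - {r})"
    using card_inj_on_le[OF inj] phylo_facts(1)[OF ph] by blast
  then show ?thesis using r phylo_facts(1)[OF ph] by simp
qed

lemma card_adj_le:
  assumes ph: "phylo_tree X (V, E)"
  shows "card (adj E) \<le> 2 * card E"
proof -
  define P1 where "P1 = adj E \<inter> {(a, b). a < b}"
  define P2 where "P2 = adj E \<inter> {(a, b). b < a}"
  have split: "adj E = P1 \<union> P2"
    unfolding P1_def P2_def using edge_facts(1)[OF ph] by (auto simp: adj_def) (meson linorder_neqE_nat)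
  have card_le: "card P \<le> card E" if "P = P1 \<or> P = P2" for P
  proof (rule card_inj_on_le[where f = "\<lambda>(a, b). {a, b}"])
    show "inj_on (\<lambda>(a, b). {a, b}) P"
      using that unfolding P1_def P2_def by (auto intro!: inj_onI simp: doubleton_eq_iff)
    show "(\<lambda>(a, b). {a, b}) ` P \<subseteq> E" using that unfolding P1_def P2_def by auto
  qed (rule finite_edges[OF ph])
  have "card P1 \<le> card E" "card P2 \<le> card E" by (rule card_le; simp)+
  then show ?thesis using split card_Un_le[of P1 P2] by simp
qed

lemma card_adj_eq_degree_sum:
  assumes ph: "phylo_tree X (V, E)"
  shows "card (adj E) = (\<Sum>v\<in>V. degree E v)"
proof -
  have "adj E = Sigma V (\<lambda>v. {w. {v, w} \<in> E})"
    using edge_facts(2)[OF ph] by (auto simp: adj_def)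
  then show ?thesis unfolding degree_def
    using card_SigmaI[of V "\<lambda>v. {w. {v, w} \<in> E}"] phylo_facts(1)[OF ph] nbr_finite[OF ph] by simp
qed

text \<open>Counting degrees: \<open>|X| + 3(|V| - |X|) \<le> 2|E| \<le> 2(|V| - 1)\<close>, hence \<open>|V| \<le> 2|X|\<close>.\<close>
lemma phylo_size_bounds:
  assumes ph: "phylo_tree X (V, E)" and ne: "X \<noteq> {}"
  shows "card V \<le> 2 * card X" "card E \<le> 2 * card X"
proof -
  have fV: "finite V" and XV: "X \<subseteq> V" using phylo_facts[OF ph] by auto
  obtain r where r: "r \<in> V" using ne XV by blast
  have "(\<Sum>v\<in>V. degree E v) = (\<Sum>v\<in>X. degree E v) + (\<Sum>v\<in>V - X. degree E v)"
    using sum.subset_diff[OF XV fV, of "degree E"] by (simp add: add.commute)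
  also have "(\<Sum>v\<in>X. degree E v) = (\<Sum>v\<in>X. 1)"
    by (rule sum.cong) (use phylo_facts(6)[OF ph] XV in blast)+
  also have "(\<Sum>v\<in>V - X. degree E v) = (\<Sum>v\<in>V - X. 3)"
    by (rule sum.cong) (use phylo_facts(7)[OF ph] in blast)+
  finally have "card X + 3 * card (V - X) \<le> 2 * card E"
    using card_adj_eq_degree_sum[OF ph] card_adj_le[OF ph] by simp
  moreover have "card E \<le> card V - 1" by (rule tree_edges_le[OF ph r])
  moreover have "card (V - X) = card V - card X" using XV fV by (simp add: card_Diff_subset finite_subset)
  moreover have "card X \<le> card V" using XV fV card_mono by blast
  moreover have "card V > 0" using r fV card_gt_0_iff by blast
  ultimately show "card V \<le> 2 * card X" "card E \<le> 2 * card X" by linarith+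
qed

section \<open>NNI moves preserve phylogenetic trees\<close>

definition nni_swap :: "nat set set \<Rightarrow> nat \<Rightarrow> nat \<Rightarrow> nat \<Rightarrow> nat \<Rightarrow> nat set set" where
  "nni_swap E u v a c = (E - {{u, a}, {v, c}}) \<union> {{v, a}, {u, c}}"

lemma nni_swap_sym: "nni_swap E v u c a = nni_swap E u v a c"
  unfolding nni_swap_def by (auto simp: insert_commute)

lemma comp_closed_separates_edge:
  assumes "comp_closed F A" "s \<in> A" "t \<notin> A" "{x, y} = {s, t}"
  shows "(x, y) \<notin> (adj F)\<^sup>*"
proof
  assume path: "(x, y) \<in> (adj F)\<^sup>*"
  from assms(4) consider "x = s" "y = t" | "x = t" "y = s" by (auto simp: doubleton_eq_iff)
  then have "(s, t) \<in> (adj F)\<^sup>*" using path adj_sym[OF path] by cases simp_all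
  then show False using comp_closed_separates[OF assms(1-3)] by blast
qed

lemma card_exchange:
  "finite N \<Longrightarrow> x \<in> N \<Longrightarrow> y \<notin> N \<Longrightarrow> card (insert y (N - {x})) = card N"
  by (metis card_Suc_Diff1 card_insert_disjoint finite_Diff insert_Diff insert_iff)

lemma tree_iso_refl: "tree_iso X (V, E) (V, E)"
  unfolding tree_iso_def by (simp, rule exI[of _ id]) auto

locale nni_config =
  fixes X V E u v a c
  assumes ph: "phylo_tree X (V, E)" and uv: "{u, v} \<in> E" and ua: "{u, a} \<in> E" and av: "a \<noteq> v"
    and vc: "{v, c} \<in> E" and cu: "c \<noteq> u"
begin

abbreviation E' where "E' \<equiv> nni_swap E u v a c"

lemma swapped: "nni_config X V E v u c a"
  using ph uv ua av vc cu by unfold_locales (simp_all add: insert_commute)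

lemma vertices: "u \<noteq> v" "u \<noteq> a" "v \<noteq> c" "u \<in> V" "v \<in> V" "a \<in> V" "c \<in> V"
  using edge_facts[OF ph uv] edge_facts[OF ph ua] edge_facts[OF ph vc] by auto

lemma bridge: "{x, y} \<in> E \<Longrightarrow> (x, y) \<notin> (adj (E - {{x, y}}))\<^sup>*"
  using phylo_facts(4)[OF ph] by blast

abbreviation side_u where "side_u \<equiv> reach (E - {{u, v}}) u"

lemma v_not_side_u: "v \<notin> side_u"
  using bridge[OF uv] unfolding reach_def by blast

lemma a_side_u: "a \<in> side_u"
proof -
  have "{u, a} \<in> E - {{u, v}}" using ua av by (simp add: doubleton_eq_iff)
  then show ?thesis by (rule reach_step[OF reach_refl])
qed

lemma c_not_side_u: "c \<notin> side_u"
proof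
  assume "c \<in> side_u"
  moreover have "{c, v} \<in> E - {{u, v}}" using vc cu by (auto simp: doubleton_eq_iff insert_commute)
  ultimately have "v \<in> side_u" by (rule reach_step)
  then show False using v_not_side_u by simp
qed

lemma new_edges_fresh: "a \<noteq> c" "{v, a} \<notin> E" "{u, c} \<notin> E"
proof -
  show "a \<noteq> c" using a_side_u c_not_side_u by blast
  show "{v, a} \<notin> E"
  proof
    assume "{v, a} \<in> E"
    moreover have "{a, v} \<noteq> {u, v}" using vertices(2) by (simp add: doubleton_eq_iff)
    ultimately have "{a, v} \<in> E - {{u, v}}" by (simp add: insert_commute)
    then have "v \<in> side_u" by (rule reach_step[OF a_side_u])
    then show False using v_not_side_u by simp
  qed
  show "{u, c} \<notin> E"
  proof
    assume "{u, c} \<in> E"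
    moreover have "{u, c} \<noteq> {u, v}" using vertices(3) by (simp add: doubleton_eq_iff)
    ultimately have "{u, c} \<in> E - {{u, v}}" by blast
    then have "c \<in> side_u" by (rule reach_step[OF reach_refl])
    then show False using c_not_side_u by simp
  qed
qed

lemma swap_edges: "e \<in> E' \<Longrightarrow> \<exists>x y. x \<noteq> y \<and> x \<in> V \<and> y \<in> V \<and> e = {x, y}"
proof -
  assume "e \<in> E'"
  then consider "e \<in> E" | "e = {v, a}" | "e = {u, c}" unfolding nni_swap_def by blast
  then show ?thesis
  proof cases
    case 1 then show ?thesis using phylo_facts(2)[OF ph] by blast
  next
    case 2 then show ?thesis using vertices av by blast
  next
    case 3 then show ?thesis using vertices cu by blast
  qed
qed

text \<open>Each removed edge is bypassed through \<open>{u, v}\<close>, which survives the move.\<close>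
lemma swap_connected: "x \<in> V \<Longrightarrow> y \<in> V \<Longrightarrow> (x, y) \<in> (adj E')\<^sup>*"
proof -
  have uvE': "{u, v} \<in> E'" using uv av cu unfolding nni_swap_def by (auto simp: doubleton_eq_iff)
  have newE': "{v, a} \<in> E'" "{u, c} \<in> E'" unfolding nni_swap_def by auto
  have old: "(s, t) \<in> (adj E')\<^sup>*" if "{s, t} \<in> E" for s t
  proof (cases "{s, t} = {u, a} \<or> {s, t} = {v, c}")
    case True
    have "(u, a) \<in> (adj E')\<^sup>*" "(a, u) \<in> (adj E')\<^sup>*" "(v, c) \<in> (adj E')\<^sup>*" "(c, v) \<in> (adj E')\<^sup>*"
      using uvE' newE' by (meson adj_edge adj_sym rtrancl_trans)+
    then show ?thesis using True by (auto simp: doubleton_eq_iff)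
  next
    case False
    then have "{s, t} \<in> E'" using that unfolding nni_swap_def by blast
    then show ?thesis by (rule adj_edge)
  qed
  have "adj E \<subseteq> (adj E')\<^sup>*"
  proof (rule subrelI)
    fix s t assume "(s, t) \<in> adj E"
    then show "(s, t) \<in> (adj E')\<^sup>*" using old by simp
  qed
  then have "(adj E)\<^sup>* \<subseteq> (adj E')\<^sup>*" by (rule rtrancl_subset_rtrancl)
  moreover assume "x \<in> V" "y \<in> V"
  then have "(x, y) \<in> (adj E)\<^sup>*" using phylo_facts(3)[OF ph] by blast
  ultimately show ?thesis by blast
qed

text \<open>An edge untouched by the move: the component of \<open>E - {e}\<close> containing one endpoint
  contains all of \<open>u, v, a, c\<close> or none of them, so it stays closed.\<close>
lemma bridge_old:
  assumes e: "{x, y} \<in> E" "{x, y} \<notin> {{u, a}, {v, c}, {u, v}}"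
  shows "(x, y) \<notin> (adj (E' - {{x, y}}))\<^sup>*"
proof -
  define A where "A = reach (E - {{x, y}}) x"
  have yA: "y \<notin> A" using bridge[OF e(1)] unfolding A_def reach_def by blast
  have e_uv: "{u, v} \<in> E - {{x, y}}" and e_ua: "{u, a} \<in> E - {{x, y}}" and e_vc: "{v, c} \<in> E - {{x, y}}"
    using uv ua vc e(2) by auto
  have same: "u \<in> A \<longleftrightarrow> v \<in> A" "u \<in> A \<longleftrightarrow> a \<in> A" "v \<in> A \<longleftrightarrow> c \<in> A"
    unfolding A_def by (rule reach_closed[OF e_uv], rule reach_closed[OF e_ua], rule reach_closed[OF e_vc])
  have "comp_closed (E' - {{x, y}}) A"
    unfolding comp_closed_def
  proof (intro allI impI)
    fix s t assume "{s, t} \<in> E' - {{x, y}}"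
    then have "{s, t} \<in> E - {{x, y}} \<or> {s, t} = {v, a} \<or> {s, t} = {u, c}" unfolding nni_swap_def by auto
    then show "s \<in> A \<longleftrightarrow> t \<in> A"
    proof (elim disjE)
      assume "{s, t} \<in> E - {{x, y}}" then show ?thesis unfolding A_def by (rule reach_closed)
    qed (use same in \<open>auto simp: doubleton_eq_iff\<close>)
  qed
  then show ?thesis using comp_closed_separates[of _ A x y] yA reach_refl unfolding A_def by blast
qed

text \<open>The central edge: with \<open>{u, a}\<close> and \<open>{v, c}\<close> also removed, the components of
  \<open>u\<close> and \<open>c\<close> form a closed set avoiding \<open>v\<close> and \<open>a\<close>.\<close>
lemma bridge_central: "(u, v) \<notin> (adj (E' - {{u, v}}))\<^sup>*"
proof -
  define E0 where "E0 = E - {{u, v}, {u, a}, {v, c}}"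
  define A where "A = reach E0 u \<union> reach E0 c"
  have sub: "E0 \<subseteq> E - {{u, v}}" "E0 \<subseteq> E - {{v, c}}" "E0 \<subseteq> E - {{u, a}}" unfolding E0_def by auto
  have "v \<notin> reach E0 u" using bridge[OF uv] adj_mono[OF sub(1)] unfolding reach_def by blast
  moreover have "v \<notin> reach E0 c" using bridge[OF vc] adj_mono[OF sub(2)] adj_sym unfolding reach_def by blast
  ultimately have vA: "v \<notin> A" unfolding A_def by blast
  have "a \<notin> reach E0 u" using bridge[OF ua] adj_mono[OF sub(3)] unfolding reach_def by blast
  moreover have "a \<notin> reach E0 c"
  proof
    assume "a \<in> reach E0 c"
    then have "c \<in> reach (E - {{u, v}}) a" using reach_sym reach_mono[OF sub(1)] by blast
    then show False using a_side_u c_not_side_u reach_trans by blast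
  qed
  ultimately have aA: "a \<notin> A" unfolding A_def by blast
  have "comp_closed (E' - {{u, v}}) A"
    unfolding comp_closed_def
  proof (intro allI impI)
    fix s t assume "{s, t} \<in> E' - {{u, v}}"
    then have "{s, t} \<in> E0 \<or> {s, t} = {v, a} \<or> {s, t} = {u, c}" unfolding nni_swap_def E0_def by auto
    then show "s \<in> A \<longleftrightarrow> t \<in> A"
      using reach_closed[of s t E0] vA aA reach_refl unfolding A_def by (auto simp: doubleton_eq_iff)
  qed
  then show ?thesis using comp_closed_separates vA reach_refl unfolding A_def by blast
qed

text \<open>A new edge: the component of \<open>a\<close> after removing \<open>{u, a}\<close> does not contain \<open>u, v, c\<close>.\<close>
lemma bridge_new: "(v, a) \<notin> (adj (E' - {{v, a}}))\<^sup>*"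
proof -
  define A where "A = reach (E - {{u, a}}) a"
  have uA: "u \<notin> A" using bridge[OF ua] adj_sym unfolding A_def reach_def by blast
  have "{v, u} \<in> E - {{u, a}}" using uv av by (simp add: doubleton_eq_iff insert_commute)
  then have vA: "v \<notin> A" using uA reach_step unfolding A_def by metis
  have "{c, v} \<in> E - {{u, a}}" using vc vertices(1,3) cu by (simp add: doubleton_eq_iff insert_commute)
  then have cA: "c \<notin> A" using vA reach_step unfolding A_def by metis
  have "comp_closed (E' - {{v, a}}) A"
    unfolding comp_closed_def
  proof (intro allI impI)
    fix s t assume "{s, t} \<in> E' - {{v, a}}"
    then have "{s, t} \<in> E - {{u, a}} \<or> {s, t} = {u, c}" unfolding nni_swap_def by auto
    then show "s \<in> A \<longleftrightarrow> t \<in> A"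
      using reach_closed[of s t "E - {{u, a}}"] uA cA unfolding A_def by (auto simp: doubleton_eq_iff)
  qed
  then show ?thesis using comp_closed_separates_edge[of _ A a v v a] vA reach_refl unfolding A_def by blast
qed

lemma swap_bridges: "{x, y} \<in> E' \<Longrightarrow> (x, y) \<notin> (adj (E' - {{x, y}}))\<^sup>*"
proof -
  assume xy: "{x, y} \<in> E'"
  have uc: "(u, c) \<notin> (adj (E' - {{u, c}}))\<^sup>*"
    using nni_config.bridge_new[OF swapped] unfolding nni_swap_sym[of E u v a c] .
  have "{x, y} = {v, a} \<or> {x, y} = {u, c} \<or> {x, y} \<in> E - {{u, a}, {v, c}}"
    using xy unfolding nni_swap_def by blast
  then consider "{x, y} = {v, a}" | "{x, y} = {u, c}" | "{x, y} = {u, v}"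
    | "{x, y} \<in> E" "{x, y} \<notin> {{u, a}, {v, c}, {u, v}}"
    by (cases "{x, y} = {u, v}") auto
  then show ?thesis
  proof cases
    case 1 show ?thesis by (rule bridge_sym[OF bridge_new 1])
  next
    case 2 show ?thesis by (rule bridge_sym[OF uc 2])
  next
    case 3 show ?thesis by (rule bridge_sym[OF bridge_central 3])
  next
    case 4 then show ?thesis by (rule bridge_old)
  qed
qed

text \<open>The neighbourhoods of \<open>u\<close> and \<open>a\<close> each exchange one vertex; all other vertices
  except \<open>v, c\<close> (handled by symmetry) keep their neighbourhood.\<close>
lemma degree_u_a: "degree E' u = degree E u" "degree E' a = degree E a"
proof -
  have "{w. {u, w} \<in> E'} = insert c ({w. {u, w} \<in> E} - {a})"
    using vertices new_edges_fresh cu av unfolding nni_swap_def by (auto simp: doubleton_eq_iff)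
  then show "degree E' u = degree E u"
    unfolding degree_def using card_exchange[OF nbr_finite[OF ph]] ua new_edges_fresh by simp
  have "{w. {a, w} \<in> E'} = insert v ({w. {a, w} \<in> E} - {u})"
    using vertices new_edges_fresh cu av unfolding nni_swap_def by (auto simp: doubleton_eq_iff)
  moreover have "u \<in> {w. {a, w} \<in> E}" "v \<notin> {w. {a, w} \<in> E}"
    using ua new_edges_fresh(2) by (simp_all add: insert_commute)
  ultimately show "degree E' a = degree E a"
    unfolding degree_def using card_exchange[OF nbr_finite[OF ph]] by simp
qed

lemma swap_degree: "degree E' w = degree E w"
proof -
  consider "w = u" | "w = a" | "w = v" | "w = c" | "w \<notin> {u, a, v, c}" by blast
  then show ?thesis
  proof cases
    case 3 then show ?thesis using nni_config.degree_u_a(1)[OF swapped] unfolding nni_swap_sym[of E u v a c] by simp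
  next
    case 4 then show ?thesis using nni_config.degree_u_a(2)[OF swapped] unfolding nni_swap_sym[of E u v a c] by simp
  next
    case 5
    then have "{z. {w, z} \<in> E'} = {z. {w, z} \<in> E}" unfolding nni_swap_def by (auto simp: doubleton_eq_iff)
    then show ?thesis unfolding degree_def by simp
  qed (use degree_u_a in simp)+
qed

lemma swap_phylo: "phylo_tree X (V, E')"
proof -
  have "is_tree (V, E')"
    unfolding is_tree_def prod.case
    using phylo_facts(1)[OF ph] swap_edges swap_connected swap_bridges by blast
  then show ?thesis
    unfolding phylo_tree_def prod.case swap_degree using phylo_facts(5-7)[OF ph] by blast
qed

lemma swap_is_nni:
  assumes "u \<notin> X" "v \<notin> X"
  shows "nni X (V, E) (V, E')"
proof -
  have "nni_move X (V, E) (V, E')"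
    unfolding nni_move_def prod.case
    by (intro exI[of _ u] exI[of _ v] exI[of _ a] exI[of _ c]) (simp add: nni_swap_def uv ua av vc cu assms)
  then show ?thesis unfolding nni_def using ph swap_phylo tree_iso_refl by blast
qed

end

section \<open>Closed walks covering a component\<close>

fun walk_edges :: "nat list \<Rightarrow> nat set list" where
  "walk_edges (x # y # xs) = {x, y} # walk_edges (y # xs)"
| "walk_edges _ = []"

lemma walk_edges_Cons: "walk_edges (x # ys) = (if ys = [] then [] else {x, hd ys} # walk_edges ys)"
  by (cases ys) auto

lemma set_walk_edges_append:
  "set (walk_edges (xs @ ys)) = set (walk_edges xs) \<union> set (walk_edges ys) \<union> (if xs \<noteq> [] \<and> ys \<noteq> [] then {{last xs, hd ys}} else {})"
proof (induction xs rule: induct_list012)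
  case 1 then show ?case by simp
next
  case (2 x) then show ?case by (cases ys) auto
next
  case (3 x y zs)
  have IH: "set (walk_edges (y # zs @ ys)) = set (walk_edges (y # zs)) \<union> set (walk_edges ys) \<union> (if ys \<noteq> [] then {{last (y # zs), hd ys}} else {})"
    using 3(2) by simp
  show ?case by (simp add: IH)
qed

lemma walk_edges_subset: "f \<in> set (walk_edges ws) \<Longrightarrow> f \<subseteq> set ws"
  by (induction ws rule: walk_edges.induct) auto

lemma length_walk_edges: "length (walk_edges ws) = length ws - 1"
  by (induction ws rule: walk_edges.induct) auto

definition comp_edges :: "nat set set \<Rightarrow> nat \<Rightarrow> nat set set" where
  "comp_edges F r = {f \<in> F. \<exists>a\<in>f. a \<in> reach F r}"

lemma comp_edges_subset: "comp_edges F r \<subseteq> F"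
  unfolding comp_edges_def by blast

lemma reach_insert:
  assumes "x \<in> reach (insert {a, b} F) r"
  shows "x \<in> reach F r \<or> (a \<in> reach F r \<and> x \<in> reach F b) \<or> (b \<in> reach F r \<and> x \<in> reach F a)"
proof -
  have "(r, x) \<in> (adj (insert {a, b} F))\<^sup>*" using assms unfolding reach_def by simp
  then show ?thesis
  proof (induction rule: rtrancl_induct)
    case base then show ?case by (simp add: reach_refl)
  next
    case (step y z)
    have st: "{y, z} \<in> F \<or> {y, z} = {a, b}" using step(2) by auto
    show ?case
    proof (cases "{y, z} \<in> F")
      case True
      then have zy: "z \<in> reach F y" unfolding reach_def by (auto intro: r_into_rtrancl)
      show ?thesis using step(3) reach_trans[OF _ zy, of r] reach_trans[OF _ zy, of b] reach_trans[OF _ zy, of a] by blast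
    next
      case False
      then have yz: "(y = a \<and> z = b) \<or> (y = b \<and> z = a)" using st by (auto simp: doubleton_eq_iff)
      then show ?thesis using step(3) reach_refl[of a F] reach_refl[of b F] by blast
    qed
  qed
qed

lemma reach_insert_cases:
  "reach (insert {a, b} F) r =
     reach F r \<union> (if a \<in> reach F r then reach F b else {}) \<union> (if b \<in> reach F r then reach F a else {})"
proof
  show "reach (insert {a, b} F) r \<subseteq> reach F r \<union> (if a \<in> reach F r then reach F b else {}) \<union> (if b \<in> reach F r then reach F a else {})"
  proof
    fix x assume "x \<in> reach (insert {a, b} F) r"
    from reach_insert[OF this] show "x \<in> reach F r \<union> (if a \<in> reach F r then reach F b else {}) \<union> (if b \<in> reach F r then reach F a else {})"
      by auto
  qed
next
  have sub: "F \<subseteq> insert {a, b} F" by auto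
  have ab: "b \<in> reach (insert {a, b} F) a" "a \<in> reach (insert {a, b} F) b"
    unfolding reach_def by (auto simp: insert_commute)
  show "reach F r \<union> (if a \<in> reach F r then reach F b else {}) \<union> (if b \<in> reach F r then reach F a else {}) \<subseteq> reach (insert {a, b} F) r"
  proof (intro Un_least)
    show "reach F r \<subseteq> reach (insert {a, b} F) r" using reach_mono[OF sub] by blast
    show "(if a \<in> reach F r then reach F b else {}) \<subseteq> reach (insert {a, b} F) r"
    proof (cases "a \<in> reach F r")
      case True
      have "a \<in> reach (insert {a, b} F) r" using True reach_mono[OF sub] by blast
      then have bR: "b \<in> reach (insert {a, b} F) r" by (rule reach_trans[OF _ ab(1)])
      show ?thesis using True by (auto intro: reach_trans[OF bR] reach_mono[OF sub])
    qed simp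
    show "(if b \<in> reach F r then reach F a else {}) \<subseteq> reach (insert {a, b} F) r"
    proof (cases "b \<in> reach F r")
      case True
      have "b \<in> reach (insert {a, b} F) r" using True reach_mono[OF sub] by blast
      then have aR: "a \<in> reach (insert {a, b} F) r" by (rule reach_trans[OF _ ab(2)])
      show ?thesis using True by (auto intro: reach_trans[OF aR] reach_mono[OF sub])
    qed simp
  qed
qed

definition covering_walk :: "nat set set \<Rightarrow> nat \<Rightarrow> nat list \<Rightarrow> bool" where
  "covering_walk F r ws \<longleftrightarrow> ws \<noteq> [] \<and> hd ws = r \<and> last ws = r \<and> set (walk_edges ws) \<subseteq> F \<and>
     comp_edges F r \<subseteq> set (walk_edges ws) \<and> length ws \<le> 2 * card (comp_edges F r) + 1"

lemma comp_vertex_on_walk: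
  assumes "covering_walk F r ws" and "a \<in> reach F r"
  obtains ws1 ws2 where "ws = ws1 @ a # ws2"
proof -
  have "a \<in> set ws"
  proof (cases "a = r")
    case True then show ?thesis using assms(1) hd_in_set unfolding covering_walk_def by blast
  next
    case False
    have "(r, a) \<in> (adj F)\<^sup>*" using assms(2) unfolding reach_def by simp
    then obtain y where "(r, y) \<in> (adj F)\<^sup>*" "(y, a) \<in> adj F" using False by (metis rtranclE)
    then have "{y, a} \<in> comp_edges F r" unfolding comp_edges_def reach_def by auto
    then have "{y, a} \<in> set (walk_edges ws)" using assms(1) unfolding covering_walk_def by blast
    then show ?thesis using walk_edges_subset by blast
  qed
  then show ?thesis using split_list that by metis
qed

lemma comp_edges_disjoint:
  assumes shape: "\<forall>f\<in>F. \<exists>x y. f = {x, y}" and "b \<notin> reach F r"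
  shows "comp_edges F r \<inter> comp_edges F b = {}"
proof (rule ccontr)
  assume "comp_edges F r \<inter> comp_edges F b \<noteq> {}"
  then obtain f where f: "f \<in> F" "\<exists>x\<in>f. x \<in> reach F r" "\<exists>x\<in>f. x \<in> reach F b"
    unfolding comp_edges_def by blast
  obtain x y where xy: "f = {x, y}" using shape f(1) by blast
  have "x \<in> reach F r \<longleftrightarrow> y \<in> reach F r" "x \<in> reach F b \<longleftrightarrow> y \<in> reach F b"
    using reach_closed[of x y F] f(1) xy by auto
  then have "x \<in> reach F r" "x \<in> reach F b" using f(2,3) xy by auto
  then have "b \<in> reach F r" using reach_sym reach_trans by blast
  then show False using assms(2) by simp
qed

lemma hd_last_insert_middle:
  assumes "hd (ws1 @ a # ws2) = r" and "last (ws1 @ a # ws2) = r"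
  shows "hd (ws1 @ a # ys @ a # ws2) = r" "last (ws1 @ a # ys @ a # ws2) = r"
  using assms by (cases ws1; cases ws2; simp)+

lemma covering_walk_detour:
  assumes fin: "finite F" and new: "{a, b} \<notin> F" and W: "covering_walk F r (ws1 @ a # ws2)"
    and aR: "a \<in> reach F r" and bR: "b \<in> reach F r"
  shows "covering_walk (insert {a, b} F) r (ws1 @ a # [b] @ a # ws2)"
proof -
  let ?F' = "insert {a, b} F"
  have "reach F b \<subseteq> reach F r" "reach F a \<subseteq> reach F r" using aR bR reach_trans by blast+
  then have "reach ?F' r = reach F r" unfolding reach_insert_cases using aR bR by auto
  then have comp': "comp_edges ?F' r = insert {a, b} (comp_edges F r)" unfolding comp_edges_def using aR by auto
  have "set (walk_edges (ws1 @ a # [b] @ a # ws2)) = insert {a, b} (set (walk_edges (ws1 @ a # ws2)))"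
    unfolding set_walk_edges_append by (auto simp: insert_commute)
  moreover have "{a, b} \<notin> comp_edges F r" using new comp_edges_subset by blast
  then have "card (comp_edges ?F' r) = Suc (card (comp_edges F r))"
    unfolding comp' using finite_subset[OF comp_edges_subset fin] by simp
  ultimately show ?thesis
    using W hd_last_insert_middle[of ws1 a ws2 r "[b]"] comp' unfolding covering_walk_def by auto
qed

lemma covering_walk_splice:
  assumes fin: "finite F" and shape: "\<forall>f\<in>F. \<exists>x y. f = {x, y}" and new: "{a, b} \<notin> F"
    and W: "covering_walk F r (ws1 @ a # ws2)" and Wb: "covering_walk F b wb"
    and aR: "a \<in> reach F r" and bR: "b \<notin> reach F r"
  shows "covering_walk (insert {a, b} F) r (ws1 @ a # wb @ a # ws2)"
proof -
  let ?F' = "insert {a, b} F"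
  have wb: "wb \<noteq> []" "hd wb = b" "last wb = b" using Wb unfolding covering_walk_def by auto
  have "reach ?F' r = reach F r \<union> reach F b" unfolding reach_insert_cases using aR bR by auto
  then have comp': "comp_edges ?F' r = insert {a, b} (comp_edges F r \<union> comp_edges F b)"
    unfolding comp_edges_def using aR by auto
  have "set (walk_edges (a # wb @ a # ws2)) = insert {a, b} (set (walk_edges (wb @ a # ws2)))"
    using wb by (simp add: walk_edges_Cons)
  also have "set (walk_edges (wb @ a # ws2)) = set (walk_edges wb) \<union> set (walk_edges (a # ws2)) \<union> {{b, a}}"
    using wb unfolding set_walk_edges_append by simp
  finally have "set (walk_edges (a # wb @ a # ws2)) =
      insert {a, b} (set (walk_edges wb) \<union> set (walk_edges (a # ws2)))"
    by (auto simp: insert_commute)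
  then have "set (walk_edges (ws1 @ a # wb @ a # ws2)) =
      insert {a, b} (set (walk_edges (ws1 @ a # ws2)) \<union> set (walk_edges wb))"
    unfolding set_walk_edges_append[of ws1] by auto
  moreover have "{a, b} \<notin> comp_edges F r \<union> comp_edges F b" using new comp_edges_subset by blast
  then have "card (comp_edges ?F' r) = Suc (card (comp_edges F r) + card (comp_edges F b))"
    unfolding comp' using finite_subset[OF comp_edges_subset fin] comp_edges_disjoint[OF shape bR]
    by (simp add: card_Un_disjoint)
  ultimately show ?thesis
    using W Wb hd_last_insert_middle[of ws1 a ws2 r wb] comp' unfolding covering_walk_def by auto
qed

lemma covering_walk_insert_edge:
  assumes fin: "finite F" and shape: "\<forall>f\<in>F. \<exists>x y. f = {x, y}" and new: "{a, b} \<notin> F"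
    and walks: "\<And>r. \<exists>ws. covering_walk F r ws" and aR: "a \<in> reach F r"
  shows "\<exists>ws. covering_walk (insert {a, b} F) r ws"
proof -
  obtain W where W: "covering_walk F r W" using walks by blast
  then obtain ws1 ws2 where split: "W = ws1 @ a # ws2" using comp_vertex_on_walk aR by blast
  show ?thesis
  proof (cases "b \<in> reach F r")
    case True
    then show ?thesis using covering_walk_detour[OF fin new W[unfolded split] aR] by blast
  next
    case False
    obtain wb where "covering_walk F b wb" using walks by blast
    then show ?thesis using covering_walk_splice[OF fin shape new W[unfolded split] _ aR False] by blast
  qed
qed

lemma covering_walk_exists:
  "finite F \<Longrightarrow> \<forall>f\<in>F. \<exists>x y. f = {x, y} \<Longrightarrow> \<exists>ws. covering_walk F r ws"
proof (induction F arbitrary: r rule: finite_induct)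
  case empty
  have "covering_walk {} r [r]" unfolding covering_walk_def comp_edges_def by simp
  then show ?case by blast
next
  case (insert e F)
  have shape: "\<forall>f\<in>F. \<exists>x y. f = {x, y}" using insert.prems by blast
  have IH: "\<And>r. \<exists>ws. covering_walk F r ws" using insert.IH shape by blast
  note extend = covering_walk_insert_edge[OF insert.hyps(1) shape _ IH]
  obtain a b where e: "e = {a, b}" using insert.prems by blast
  consider "a \<in> reach F r" | "b \<in> reach F r" | "a \<notin> reach F r" "b \<notin> reach F r" by blast
  then show ?case
  proof cases
    case 1 then show ?thesis using extend[OF _ 1] insert.hyps(2) e by blast
  next
    case 2 then show ?thesis using extend[OF _ 2] insert.hyps(2) e by (simp add: insert_commute)
  next
    case 3
    obtain W where W: "covering_walk F r W" using IH by blast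
    have "reach (insert e F) r = reach F r" unfolding e reach_insert_cases using 3 by auto
    then have "comp_edges (insert e F) r = comp_edges F r" unfolding comp_edges_def using 3 e by auto
    then have "covering_walk (insert e F) r W" using W unfolding covering_walk_def by auto
    then show ?thesis by blast
  qed
qed

section \<open>NNI tours\<close>

text \<open>Steps of an NNI walk that may also stand still; repetitions are removed at the end.\<close>
definition nni_or_eq :: "nat set \<Rightarrow> graph \<Rightarrow> graph \<Rightarrow> bool" where
  "nni_or_eq X A B \<longleftrightarrow> A = B \<or> nni X A B"

definition nni_tour :: "nat set \<Rightarrow> graph \<Rightarrow> graph list \<Rightarrow> bool" where
  "nni_tour X T Ls \<longleftrightarrow> Ls \<noteq> [] \<and> hd Ls = T \<and> last Ls = T \<and> (\<forall>T'\<in>set Ls. phylo_tree X T') \<and>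
     successively (nni_or_eq X) Ls"

lemma nni_tour_concat:
  assumes "phylo_tree X T" and "\<forall>Ls\<in>set Lss. nni_tour X T Ls"
  shows "nni_tour X T (T # concat Lss)"
  using assms(2)
proof (induction Lss)
  case Nil then show ?case using assms(1) unfolding nni_tour_def by simp
next
  case (Cons Ls rest)
  have L: "Ls \<noteq> []" "hd Ls = T" "last Ls = T" "successively (nni_or_eq X) Ls" "\<forall>T'\<in>set Ls. phylo_tree X T'"
    using Cons.prems unfolding nni_tour_def by auto
  have IH: "nni_tour X T (T # concat rest)" using Cons by simp
  have head: "successively (nni_or_eq X) (T # Ls)" using L unfolding nni_or_eq_def by (cases Ls) auto
  have "successively (nni_or_eq X) (T # concat rest)" using IH unfolding nni_tour_def by simp
  then consider "concat rest = []"
    | "nni_or_eq X T (hd (concat rest))" "successively (nni_or_eq X) (concat rest)" "concat rest \<noteq> []"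
    by (auto simp: successively_Cons simp del: concat_eq_Nil_conv)
  then have "successively (nni_or_eq X) ((T # Ls) @ concat rest)"
  proof cases
    case 1 then show ?thesis using head by (simp del: concat_eq_Nil_conv)
  next
    case 2 then show ?thesis using head L unfolding successively_append_iff by simp
  qed
  moreover have "last ((T # Ls) @ concat rest) = T"
  proof (cases "concat rest = []")
    case False
    have "last (T # concat rest) = T" using IH unfolding nni_tour_def by blast
    then show ?thesis using False by (simp del: concat_eq_Nil_conv)
  qed (use L in \<open>simp del: concat_eq_Nil_conv\<close>)
  ultimately show ?case using IH L unfolding nni_tour_def by auto
qed

lemma successively_remdups_adj_strict:
  "successively (\<lambda>A B. A = B \<or> R A B) xs \<Longrightarrow> successively R (remdups_adj xs)"
proof (induction xs rule: remdups_adj.induct)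
  case (3 x y xs)
  show ?case
  proof (cases "x = y")
    case True
    then show ?thesis using 3 by auto
  next
    case False
    have "successively R (remdups_adj (y # xs))" using 3 False by auto
    moreover have "R x y" using 3(3) False by simp
    ultimately show ?thesis using False by (simp add: successively_Cons)
  qed
qed simp_all

lemma nni_tour_walk:
  assumes "nni_tour X T Ls"
  shows "nni_walk X (remdups_adj Ls)" "set (remdups_adj Ls) = set Ls" "length (remdups_adj Ls) \<le> length Ls"
proof -
  have "successively (nni X) (remdups_adj Ls)"
    using assms successively_remdups_adj_strict[of "nni X"]
    unfolding nni_tour_def nni_or_eq_def[abs_def] by blast
  then show "nni_walk X (remdups_adj Ls)"
    using assms successively_nth unfolding nni_walk_def nni_tour_def by auto
qed (simp_all add: remdups_adj_length)


section \<open>Pruning and regrafting\<close>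

definition pruned_part :: "nat set set \<Rightarrow> nat \<Rightarrow> nat \<Rightarrow> nat set" where
  "pruned_part E u v = {w. (v, w) \<in> (adj (E - {{u, v}}))\<^sup>*}"

definition remainder :: "nat set set \<Rightarrow> nat \<Rightarrow> nat \<Rightarrow> nat \<Rightarrow> nat \<Rightarrow> nat set set" where
  "remainder E u v p q = ({e \<in> E. e \<inter> pruned_part E u v = {}} - {{u, p}, {u, q}}) \<union> {{p, q}}"

definition regraft :: "nat set set \<Rightarrow> nat \<Rightarrow> nat \<Rightarrow> nat \<Rightarrow> nat \<Rightarrow> nat set \<Rightarrow> nat set set" where
  "regraft E u v p q e =
     {f \<in> E. f \<subseteq> pruned_part E u v} \<union> (remainder E u v p q - {e}) \<union> ((\<lambda>w. {u, w}) ` e) \<union> {{u, v}}"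

lemma regraft_alt:
  "regraft E u v p q {x, y} =
     {e \<in> E. e \<subseteq> pruned_part E u v} \<union> (remainder E u v p q - {{x, y}}) \<union> {{x, u}, {u, y}, {u, v}}"
proof -
  have "(\<lambda>w. {u, w}) ` {x, y} = {{x, u}, {u, y}}" by (simp add: insert_commute)
  then show ?thesis unfolding regraft_def by blast
qed

lemma spr_move_elim:
  assumes "spr_move X (V, E) (V', E')"
  shows "\<exists>u v p q x y. {u, v} \<in> E \<and> u \<notin> X \<and> {u, p} \<in> E \<and> {u, q} \<in> E \<and> p \<noteq> q \<and> p \<noteq> v \<and> q \<noteq> v \<and>
     {x, y} \<in> remainder E u v p q \<and> V' = V \<and> E' = regraft E u v p q {x, y}"
  using assms unfolding spr_move_def prod.case Let_def pruned_part_def[symmetric] remainder_def[symmetric]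
    regraft_alt
  by blast

definition consecutive :: "nat set \<Rightarrow> nat set \<Rightarrow> bool" where
  "consecutive e e' \<longleftrightarrow> (\<exists>x y z. e = {x, y} \<and> e' = {y, z})"

lemma consecutive_walk_edges: "successively consecutive ({x, w} # walk_edges (w # ws) @ [{last (w # ws), z}])"
proof (induction ws arbitrary: x w)
  case Nil
  show ?case unfolding consecutive_def by auto
next
  case (Cons w' ws)
  have "consecutive {x, w} {w, w'}" unfolding consecutive_def by blast
  then show ?case using Cons.IH[of w w'] by simp
qed

locale spr_config =
  fixes X V E u v p q
  assumes ph: "phylo_tree X (V, E)" and uX: "u \<notin> X" and uv: "{u, v} \<in> E" and up: "{u, p} \<in> E"
    and uq: "{u, q} \<in> E" and pq: "p \<noteq> q" and pv: "p \<noteq> v" and qv: "q \<noteq> v"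
begin

abbreviation "S \<equiv> pruned_part E u v"
abbreviation "ER \<equiv> remainder E u v p q"
abbreviation "G \<equiv> regraft E u v p q"

lemma vertices: "u \<in> V" "v \<in> V" "p \<in> V" "q \<in> V" "u \<noteq> v" "u \<noteq> p" "u \<noteq> q"
  using edge_facts[OF ph uv] edge_facts[OF ph up] edge_facts[OF ph uq] by auto

lemma nbrs_u: "{w. {u, w} \<in> E} = {v, p, q}"
proof -
  have d: "degree E u = 3" using phylo_facts(7)[OF ph] vertices uX by blast
  have sub: "{v, p, q} \<subseteq> {w. {u, w} \<in> E}" using uv up uq by auto
  have c: "card {v, p, q} = 3" using pq pv qv by auto
  show ?thesis using card_subset_eq[OF nbr_finite[OF ph] sub] c d unfolding degree_def by simp
qed

lemma bridge: "{a, b} \<in> E \<Longrightarrow> (a, b) \<notin> (adj (E - {{a, b}}))\<^sup>*"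
  using phylo_facts(4)[OF ph] by blast

lemma v_pruned: "v \<in> S" unfolding pruned_part_def by simp

lemma pruned_step: "s \<in> S \<Longrightarrow> {s, t} \<in> E \<Longrightarrow> {s, t} \<noteq> {u, v} \<Longrightarrow> t \<in> S"
proof -
  assume a: "s \<in> S" "{s, t} \<in> E" "{s, t} \<noteq> {u, v}"
  then have st: "(s, t) \<in> adj (E - {{u, v}})" by simp
  have "(v, s) \<in> (adj (E - {{u, v}}))\<^sup>*" using a(1) unfolding pruned_part_def by simp
  then have "(v, t) \<in> (adj (E - {{u, v}}))\<^sup>*" using st by (rule rtrancl_into_rtrancl)
  then show "t \<in> S" unfolding pruned_part_def by simp
qed

lemma u_not_pruned: "u \<notin> S"
  using bridge[OF uv] adj_sym unfolding pruned_part_def by blast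

lemma nbr_not_pruned: "{u, w} \<in> E \<Longrightarrow> w \<noteq> v \<Longrightarrow> w \<notin> S"
proof
  assume "{u, w} \<in> E" "w \<noteq> v" "w \<in> S"
  moreover have "{w, u} \<in> E" "{w, u} \<noteq> {u, v}"
    using \<open>{u, w} \<in> E\<close> \<open>w \<noteq> v\<close> by (auto simp: insert_commute doubleton_eq_iff)
  ultimately have "u \<in> S" using pruned_step by blast
  then show False using u_not_pruned by simp
qed

lemma p_not_pruned: "p \<notin> S" using nbr_not_pruned[OF up pv] .
lemma q_not_pruned: "q \<notin> S" using nbr_not_pruned[OF uq qv] .

lemma pq_not_edge: "{p, q} \<notin> E"
proof
  assume pq_not_edge: "{p, q} \<in> E"
  have e1: "{u, q} \<in> E - {{u, p}}" using uq pq by (auto simp: doubleton_eq_iff)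
  have "{p, q} \<noteq> {u, p}" using vertices pq by (auto simp: doubleton_eq_iff)
  then have e2: "{q, p} \<in> E - {{u, p}}" using pq_not_edge by (simp add: insert_commute)
  have "(u, q) \<in> (adj (E - {{u, p}}))\<^sup>*" using e1 by (rule adj_edge)
  moreover have "(q, p) \<in> (adj (E - {{u, p}}))\<^sup>*" using e2 by (rule adj_edge)
  ultimately have "(u, p) \<in> (adj (E - {{u, p}}))\<^sup>*" by (rule rtrancl_trans)
  then show False using bridge[OF up] by blast
qed

lemma remainder_edge:
  assumes "f \<in> ER"
  shows "\<exists>x y. f = {x, y} \<and> x \<noteq> y \<and> x \<in> V \<and> y \<in> V \<and> x \<notin> S \<and> y \<notin> S \<and> x \<noteq> u \<and> y \<noteq> u"
proof (cases "f = {p, q}")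
  case True then show ?thesis using pq vertices p_not_pruned q_not_pruned by blast
next
  case False
  then have f: "f \<in> E" "f \<inter> S = {}" "f \<noteq> {u, p}" "f \<noteq> {u, q}" using assms unfolding remainder_def by auto
  obtain x y where xy: "x \<noteq> y" "x \<in> V" "y \<in> V" "f = {x, y}" using phylo_facts(2)[OF ph f(1)] by blast
  have "x \<noteq> u"
  proof
    assume "x = u"
    then have "y \<in> {v, p, q}" using nbrs_u f(1) xy by blast
    then show False using f xy v_pruned \<open>x = u\<close> by auto
  qed
  moreover have "y \<noteq> u"
  proof
    assume "y = u"
    then have fx: "f = {u, x}" using xy by (simp add: insert_commute)
    then have "x \<in> {v, p, q}" using nbrs_u f(1) by blast
    then show False using f fx v_pruned by auto
  qed
  ultimately show ?thesis using xy f(2) by blast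
qed

lemma remainder_finite: "finite ER"
proof -
  have "ER \<subseteq> insert {p, q} E" unfolding remainder_def by auto
  then show ?thesis using finite_edges[OF ph] finite_subset by blast
qed

lemma remainder_doubletons: "\<forall>f\<in>ER. \<exists>x y. f = {x, y}"
  using remainder_edge by blast

lemma edge_trichotomy: "e \<in> E \<Longrightarrow> e \<subseteq> S \<or> e \<inter> S = {} \<or> e = {u, v}"
proof -
  assume e: "e \<in> E"
  obtain x y where xy: "x \<noteq> y" "e = {x, y}" using phylo_facts(2)[OF ph e] by blast
  show ?thesis
  proof (cases "x \<in> S \<longleftrightarrow> y \<in> S")
    case True then show ?thesis using xy by auto
  next
    case False
    have e2: "{y, x} \<in> E" using e xy by (simp add: insert_commute)
    have "{x, y} = {u, v}"
    proof (rule ccontr)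
      assume ne: "{x, y} \<noteq> {u, v}"
      then have ne2: "{y, x} \<noteq> {u, v}" by (simp add: insert_commute)
      show False
      proof (cases "x \<in> S")
        case True then show False using pruned_step[OF True _ ne] e xy False by simp
      next
        case nx: False
        then have "y \<in> S" using False by blast
        then show False using pruned_step[OF _ e2 ne2] nx by blast
      qed
    qed
    then show ?thesis using xy by simp
  qed
qed

lemma regraft_original: "G {p, q} = E"
proof -
  have "G {p, q} = {f \<in> E. f \<subseteq> S} \<union> ({e \<in> E. e \<inter> S = {}} - {{u, p}, {u, q}}) \<union> {{u, p},{u, q}} \<union> {{u, v}}"
    unfolding regraft_def remainder_def using pq_not_edge by auto
  also have "\<dots> = E"
  proof
    show "{f \<in> E. f \<subseteq> S} \<union> ({e \<in> E. e \<inter> S = {}} - {{u, p}, {u, q}}) \<union> {{u, p},{u, q}} \<union> {{u, v}} \<subseteq> E"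
      using up uq uv by auto
    show "E \<subseteq> {f \<in> E. f \<subseteq> S} \<union> ({e \<in> E. e \<inter> S = {}} - {{u, p}, {u, q}}) \<union> {{u, p},{u, q}} \<union> {{u, v}}"
      using edge_trichotomy by blast
  qed
  finally show ?thesis .
qed

lemma remainder_reach_outside: "x \<in> reach ER p \<Longrightarrow> x \<notin> S \<and> x \<noteq> u"
proof -
  assume "x \<in> reach ER p"
  then have "(p, x) \<in> (adj ER)\<^sup>*" unfolding reach_def by simp
  then show ?thesis
  proof (induction rule: rtrancl_induct)
    case base then show ?case using p_not_pruned vertices by simp
  next
    case (step y z)
    from step(2) have yz: "{y, z} \<in> ER" by (simp only: adj_iff)
    obtain a b where ab: "{y, z} = {a, b}" "a \<notin> S" "b \<notin> S" "a \<noteq> u" "b \<noteq> u"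
      using remainder_edge[OF yz] by blast
    have "z \<in> {a, b}" using ab(1) by auto
    then show ?case using ab by blast
  qed
qed

lemma remainder_connected: "x \<in> V \<Longrightarrow> x \<notin> S \<Longrightarrow> x \<noteq> u \<Longrightarrow> x \<in> reach ER p"
proof (rule ccontr)
  assume x: "x \<in> V" "x \<notin> S" "x \<noteq> u" and nx: "x \<notin> reach ER p"
  define K where "K = reach ER p"
  define A where "A = K \<union> {u} \<union> S"
  have pK: "p \<in> K" unfolding K_def by (rule reach_refl)
  have qK: "q \<in> K"
  proof -
    have "{p, q} \<in> ER" unfolding remainder_def by simp
    then show ?thesis using reach_step[OF pK[unfolded K_def]] unfolding K_def by blast
  qed
  have "(p, x) \<in> (adj E)\<^sup>*" using phylo_facts(3)[OF ph] vertices x by blast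
  moreover have "p \<in> A" "x \<notin> A" using pK x nx unfolding A_def K_def by auto
  ultimately obtain s t where st: "{s, t} \<in> E" "s \<in> A" "t \<notin> A" using path_leaves_set[of p x E A] by blast
  have tK: "t \<notin> K" "t \<noteq> u" "t \<notin> S" using st(3) unfolding A_def by auto
  show False
  proof (cases "s \<in> S")
    case True
    have "{s, t} \<noteq> {u, v}" using True u_not_pruned tK by (auto simp: doubleton_eq_iff)
    then show False using pruned_step[OF True st(1)] tK by blast
  next
    case sS: False
    show False
    proof (cases "s = u")
      case True
      then have "t \<in> {v, p, q}" using nbrs_u st(1) by blast
      then show False using v_pruned pK qK tK by auto
    next
      case False
      then have sK: "s \<in> K" using st(2) sS unfolding A_def by blast
      have "s \<noteq> u" using remainder_reach_outside sK unfolding K_def by blast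
      then have "{s, t} \<in> ER" unfolding remainder_def using st(1) sS tK by (auto simp: doubleton_eq_iff)
      then have "t \<in> K" using reach_step sK unfolding K_def by blast
      then show False using tK by simp
    qed
  qed
qed

text \<open>Hence a covering walk of the component of \<open>p\<close> covers every regraft position.\<close>
lemma remainder_comp_edges: "comp_edges ER p = ER"
proof -
  have "f \<in> comp_edges ER p" if f: "f \<in> ER" for f
  proof -
    obtain x y where "f = {x, y}" "x \<in> V" "x \<notin> S" "x \<noteq> u" using remainder_edge[OF f] by blast
    then show ?thesis using remainder_connected f unfolding comp_edges_def by blast
  qed
  then show ?thesis using comp_edges_subset by blast
qed

lemma remainder_edge_ends: "{x, y} \<in> ER \<Longrightarrow> x \<noteq> y \<and> x \<in> V \<and> y \<in> V \<and> x \<notin> S \<and> y \<notin> S \<and> x \<noteq> u \<and> y \<noteq> u"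
proof -
  assume xy: "{x, y} \<in> ER"
  obtain a b where ab: "{x, y} = {a, b}" "a \<noteq> b" "a \<in> V" "b \<in> V" "a \<notin> S" "b \<notin> S" "a \<noteq> u" "b \<noteq> u"
    using remainder_edge[OF xy] by blast
  have "x \<in> {a, b}" "y \<in> {a, b}" using ab(1) by auto
  moreover have "x \<noteq> y"
  proof
    assume "x = y"
    then have "a \<in> {x}" "b \<in> {x}" using ab(1) by auto
    then show False using ab(2) by simp
  qed
  ultimately show ?thesis using ab by blast
qed

lemma u_notin_remainder: "f \<in> ER \<Longrightarrow> u \<notin> f"
  using remainder_edge by blast

lemma regraft_eq: "G {x, y} = {f \<in> E. f \<subseteq> S} \<union> (ER - {{x, y}}) \<union> {{u, x},{u, y},{u, v}}"
  unfolding regraft_def by auto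

lemma regraft_step_edges:
  assumes "{x, y} \<in> ER" and "{y, z} \<in> ER" and "x \<noteq> z"
  shows "{u, y} \<in> G {x, y}" "{u, x} \<in> G {x, y}" "{y, z} \<in> G {x, y}"
proof -
  show "{u, y} \<in> G {x, y}" "{u, x} \<in> G {x, y}" unfolding regraft_eq by auto
  have "{x, y} \<noteq> {y, z}" using assms(3) by (auto simp: doubleton_eq_iff)
  then show "{y, z} \<in> G {x, y}" using assms(2) unfolding regraft_eq by blast
qed

lemma regraft_step_swap:
  assumes e: "{x, y} \<in> ER" and e': "{y, z} \<in> ER" and xz: "x \<noteq> z"
  shows "G {y, z} = nni_swap (G {x, y}) u y x z"
proof -
  have fx: "x \<noteq> y" "x \<notin> S" "y \<notin> S" "x \<noteq> u" "y \<noteq> u" using remainder_edge_ends[OF e] by auto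
  have fz: "y \<noteq> z" "z \<notin> S" "z \<noteq> u" using remainder_edge_ends[OF e'] by auto
  let ?A = "{f \<in> E. f \<subseteq> S}"
  have n1: "{u, x} \<notin> ?A" "{y, z} \<notin> ?A" using u_not_pruned fx by auto
  have n3: "{u, x} \<notin> ER" using u_notin_remainder by blast
  have n4: "{u, x} \<noteq> {u, y}" "{u, x} \<noteq> {u, v}" "{y, z} \<noteq> {u, y}" "{y, z} \<noteq> {u, v}" "{x, y} \<noteq> {y, z}"
    using fx fz xz v_pruned vertices by (auto simp: doubleton_eq_iff)
  have "nni_swap (G {x, y}) u y x z =
      (?A \<union> (ER - {{x, y}}) \<union> {{u, x}, {u, y}, {u, v}} - {{u, x}, {y, z}}) \<union> {{x, y}, {u, z}}"
    unfolding nni_swap_def regraft_eq by (simp add: insert_commute)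
  also have "\<dots> = ?A \<union> (ER - {{y, z}}) \<union> {{u, y}, {u, z}, {u, v}}"
  proof (intro equalityI subsetI)
    fix f assume "f \<in> (?A \<union> (ER - {{x, y}}) \<union> {{u, x}, {u, y}, {u, v}} - {{u, x}, {y, z}}) \<union> {{x, y}, {u, z}}"
    then consider "f \<in> ?A" | "f \<in> ER - {{x, y}}" "f \<noteq> {y, z}" | "f = {u, y}" | "f = {u, v}"
      | "f = {x, y}" | "f = {u, z}"
      by blast
    then show "f \<in> ?A \<union> (ER - {{y, z}}) \<union> {{u, y}, {u, z}, {u, v}}"
    proof cases
      case 5 then show ?thesis using e n4(5) by blast
    qed blast+
  next
    fix f assume "f \<in> ?A \<union> (ER - {{y, z}}) \<union> {{u, y}, {u, z}, {u, v}}"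
    then consider "f \<in> ?A" | "f \<in> ER - {{y, z}}" | "f = {u, y}" | "f = {u, z}" | "f = {u, v}"
      by blast
    then show "f \<in> (?A \<union> (ER - {{x, y}}) \<union> {{u, x}, {u, y}, {u, v}} - {{u, x}, {y, z}}) \<union> {{x, y}, {u, z}}"
    proof cases
      case 1 then show ?thesis using n1 by blast
    next
      case 2 then show ?thesis using n3 by blast
    next
      case 3 then show ?thesis using n4 by blast
    next
      case 5 then show ?thesis using n4 by blast
    qed blast
  qed
  also have "\<dots> = G {y, z}" unfolding regraft_eq ..
  finally show ?thesis ..
qed

lemma regraft_nni:
  assumes e: "{x, y} \<in> ER" and e': "{y, z} \<in> ER" and xz: "x \<noteq> z" and phG: "phylo_tree X (V, G {x, y})"
  shows "nni X (V, G {x, y}) (V, G {y, z}) \<and> phylo_tree X (V, G {y, z})"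
proof -
  note edges = regraft_step_edges[OF e e' xz]
  have "x \<noteq> y" "z \<noteq> u" using remainder_edge_ends[OF e] remainder_edge_ends[OF e'] by auto
  then have cfg: "nni_config X V (G {x, y}) u y x z"
    using phG edges by unfold_locales
  have "{y, u} \<in> G {x, y}" using edges(1) by (simp add: insert_commute)
  then have "y \<notin> X" using two_nbrs_not_leaf[OF phG _ edges(3)] \<open>z \<noteq> u\<close> by blast
  then show ?thesis
    using nni_config.swap_is_nni[OF cfg uX] nni_config.swap_phylo[OF cfg]
    unfolding regraft_step_swap[OF e e' xz] by blast
qed

lemma regraft_chain:
  "successively consecutive es \<Longrightarrow> set es \<subseteq> ER \<Longrightarrow> es \<noteq> [] \<Longrightarrow> phylo_tree X (V, G (hd es)) \<Longrightarrow>
   (\<forall>e\<in>set es. phylo_tree X (V, G e)) \<and> successively (nni_or_eq X) (map (\<lambda>e. (V, G e)) es)"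
proof (induction es rule: induct_list012)
  case (3 e1 e2 rest)
  obtain a b c where abc: "e1 = {a, b}" "e2 = {b, c}" using 3(3) unfolding consecutive_def by auto
  have e1: "{a, b} \<in> ER" and e2: "{b, c} \<in> ER" using 3(4) abc by auto
  have step: "phylo_tree X (V, G e2) \<and> nni_or_eq X (V, G e1) (V, G e2)"
  proof (cases "a = c")
    case True
    then have "e1 = e2" using abc by (simp add: insert_commute)
    then show ?thesis using 3(6) unfolding nni_or_eq_def by simp
  next
    case False
    then show ?thesis using regraft_nni[OF e1 e2 False] 3(6) abc unfolding nni_or_eq_def by simp
  qed
  have "(\<forall>e\<in>set (e2 # rest). phylo_tree X (V, G e)) \<and>
        successively (nni_or_eq X) (map (\<lambda>e. (V, G e)) (e2 # rest))"
    using 3(2) 3(3) 3(4) step by simp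
  then show ?case using 3(6) step by auto
qed simp_all


text \<open>For a fixed cut edge, a closed walk through the remainder starting and ending at
  \<open>{p, q}\<close> yields an NNI tour at \<open>T\<close> visiting every regraft, of length \<open>O(|E|)\<close>.\<close>
lemma prune_tour:
  "\<exists>Ls. nni_tour X (V, E) Ls \<and> length Ls \<le> 2 * card E + 4 \<and> (\<forall>f\<in>ER. (V, G f) \<in> set Ls)"
proof -
  obtain ws where ws: "covering_walk ER p ws" using covering_walk_exists[OF remainder_finite remainder_doubletons] by blast
  then obtain ws' where ws': "ws = p # ws'" unfolding covering_walk_def by (cases ws) auto
  have lastp: "last (p # ws') = p" using ws ws' unfolding covering_walk_def by simp
  define el where "el = {q, p} # walk_edges (p # ws') @ [{last (p # ws'), q}]"
  have chain: "successively consecutive el" unfolding el_def by (rule consecutive_walk_edges)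
  have pq_rem: "{p, q} \<in> ER" unfolding remainder_def by simp
  have qp: "{q, p} = {p, q}" by (rule insert_commute)
  have set_el: "set el = insert {p, q} (set (walk_edges ws))" unfolding el_def lastp ws' qp by auto
  have el_rem: "set el \<subseteq> ER" using ws pq_rem unfolding set_el covering_walk_def by auto
  have hd_el: "hd el = {p, q}" unfolding el_def qp by simp
  have last_el: "last el = {p, q}" unfolding el_def lastp by simp
  define Ls where "Ls = map (\<lambda>e. (V, G e)) el"
  have "nni_tour X (V, E) Ls"
    using regraft_chain[OF chain el_rem] regraft_original ph hd_el last_el
    unfolding nni_tour_def Ls_def el_def by (simp add: hd_map last_map)
  moreover have "card ER \<le> card E + 1"
  proof -
    have "ER \<subseteq> insert {p, q} E" unfolding remainder_def by auto
    then have "card ER \<le> card (insert {p, q} E)" using finite_edges[OF ph] by (simp add: card_mono)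
    also have "\<dots> \<le> card E + 1" by (simp add: card_insert_le_m1)
    finally show ?thesis .
  qed
  then have "length Ls \<le> 2 * card E + 4"
    using ws unfolding Ls_def el_def ws' covering_walk_def remainder_comp_edges by (simp add: length_walk_edges)
  moreover have "ER \<subseteq> set el" using ws unfolding covering_walk_def remainder_comp_edges set_el by blast
  then have "\<forall>f\<in>ER. (V, G f) \<in> set Ls" unfolding Ls_def by auto
  ultimately show ?thesis by blast
qed

lemma remainder_indep:
  assumes "{u, p'} \<in> E" "{u, q'} \<in> E" "p' \<noteq> q'" "p' \<noteq> v" "q' \<noteq> v"
  shows "remainder E u v p' q' = ER"
proof -
  have "p' \<in> {p, q}" "q' \<in> {p, q}" using assms nbrs_u by auto
  then have "(p' = p \<and> q' = q) \<or> (p' = q \<and> q' = p)" using assms(3) by auto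
  then show ?thesis unfolding remainder_def by (auto simp: insert_commute)
qed

end

text \<open>An internal vertex \<open>u\<close> and a neighbour \<open>v\<close> determine the other two neighbours
  \<open>p, q\<close>, so every cut edge has a tour through all of its regrafts, in whichever order
  \<open>p\<close> and \<open>q\<close> are named.\<close>
lemma cut_edge_tour:
  assumes ph: "phylo_tree X (V, E)" and uv: "{u, v} \<in> E" and uX: "u \<notin> X"
  shows "\<exists>Ls. nni_tour X (V, E) Ls \<and> length Ls \<le> 2 * card E + 4 \<and>
     (\<forall>p q x y. {u, p} \<in> E \<and> {u, q} \<in> E \<and> p \<noteq> q \<and> p \<noteq> v \<and> q \<noteq> v \<and> {x, y} \<in> remainder E u v p q \<longrightarrow>
        (V, regraft E u v p q {x, y}) \<in> set Ls)"
proof -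
  let ?N = "{w. {u, w} \<in> E}"
  have "card ?N = 3" using phylo_facts(7)[OF ph edge_facts(2)[OF ph uv] uX] unfolding degree_def .
  moreover have "v \<in> ?N" using uv by simp
  ultimately have "card (?N - {v}) = 2" using nbr_finite[OF ph] by simp
  then obtain p q where pq: "?N - {v} = {p, q}" "p \<noteq> q" by (meson card_2_iff)
  then interpret spr_config X V E u v p q
    using ph uX uv by unfold_locales auto
  obtain Ls where Ls: "nni_tour X (V, E) Ls" "length Ls \<le> 2 * card E + 4" "\<forall>f\<in>ER. (V, G f) \<in> set Ls"
    using prune_tour by blast
  have "(V, regraft E u v p' q' {x, y}) \<in> set Ls"
    if "{u, p'} \<in> E" "{u, q'} \<in> E" "p' \<noteq> q'" "p' \<noteq> v" "q' \<noteq> v" "{x, y} \<in> remainder E u v p' q'"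
    for p' q' x y
  proof -
    have eq: "remainder E u v p' q' = ER" using remainder_indep that(1-5) .
    then have "regraft E u v p' q' {x, y} = G {x, y}" unfolding regraft_def by simp
    then show ?thesis using Ls(3) that(6) eq by simp
  qed
  then show ?thesis using Ls by blast
qed

lemma spr_tour:
  assumes ph: "phylo_tree X (V, E)"
  shows "\<exists>Ls. nni_tour X (V, E) Ls \<and> length Ls \<le> 1 + 2 * card E * (2 * card E + 4) \<and>
    (\<forall>T. spr_move X (V, E) T \<longrightarrow> T \<in> set Ls)"
proof -
  define cuts where "cuts = {(u, v). {u, v} \<in> E \<and> u \<notin> X}"
  define covers where "covers c Ls \<longleftrightarrow> nni_tour X (V, E) Ls \<and> length Ls \<le> 2 * card E + 4 \<and>
     (\<forall>p q x y. {fst c, p} \<in> E \<and> {fst c, q} \<in> E \<and> p \<noteq> q \<and> p \<noteq> snd c \<and> q \<noteq> snd c \<and>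
        {x, y} \<in> remainder E (fst c) (snd c) p q \<longrightarrow> (V, regraft E (fst c) (snd c) p q {x, y}) \<in> set Ls)"
    for c Ls
  have "\<forall>c\<in>cuts. \<exists>Ls. covers c Ls"
    using cut_edge_tour[OF ph] unfolding cuts_def covers_def by auto
  then obtain tour_of where tour_of: "\<And>c. c \<in> cuts \<Longrightarrow> covers c (tour_of c)" by metis
  have cuts_adj: "cuts \<subseteq> adj E" unfolding cuts_def by auto
  have "adj E \<subseteq> V \<times> V" using edge_facts(2,3)[OF ph] by auto
  then have fin_adj: "finite (adj E)" using phylo_facts(1)[OF ph] finite_subset by blast
  then obtain cl where cl: "set cl = cuts" "distinct cl" using finite_distinct_list finite_subset[OF cuts_adj] by metis
  have card_cuts: "length cl \<le> 2 * card E"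
    using distinct_card[OF cl(2)] card_mono[OF fin_adj cuts_adj] card_adj_le[OF ph] cl(1) by simp
  define Ls where "Ls = (V, E) # concat (map tour_of cl)"
  have "nni_tour X (V, E) Ls"
    unfolding Ls_def using nni_tour_concat[OF ph] tour_of cl(1) unfolding covers_def by auto
  moreover have "length Ls \<le> 1 + 2 * card E * (2 * card E + 4)"
  proof -
    have "length (concat (map tour_of cl)) \<le> (\<Sum>c\<leftarrow>cl. 2 * card E + 4)"
      unfolding length_concat map_map o_def
      by (rule sum_list_mono) (use tour_of cl(1) in \<open>auto simp: covers_def\<close>)
    also have "\<dots> \<le> 2 * card E * (2 * card E + 4)" using card_cuts by (simp add: sum_list_triv)
    finally show ?thesis unfolding Ls_def by simp
  qed
  moreover have "T \<in> set Ls" if move: "spr_move X (V, E) T" for T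
  proof -
    obtain V' E' where T: "T = (V', E')" by (cases T)
    obtain u v p q x y where m: "{u, v} \<in> E" "u \<notin> X" "{u, p} \<in> E" "{u, q} \<in> E" "p \<noteq> q" "p \<noteq> v" "q \<noteq> v"
      "{x, y} \<in> remainder E u v p q" "V' = V" "E' = regraft E u v p q {x, y}"
      using spr_move_elim[OF move[unfolded T]] by blast
    have c: "(u, v) \<in> cuts" unfolding cuts_def using m by simp
    then have "T \<in> set (tour_of (u, v))" using tour_of[OF c] m unfolding covers_def T by auto
    then show ?thesis unfolding Ls_def using c cl(1) by auto
  qed
  ultimately show ?thesis by blast
qed

lemma quadratic_bound:
  fixes n e :: nat
  assumes "1 \<le> n" and "e \<le> 2 * n"
  shows "1 + 2 * e * (2 * e + 4) \<le> 40 * n\<^sup>2"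
proof -
  have "2 * e * (2 * e + 4) \<le> (4 * n) * (4 * n + 4)"
    using mult_le_mono[of "2 * e" "4 * n" "2 * e + 4" "4 * n + 4"] assms(2) by simp
  also have "\<dots> = 16 * n\<^sup>2 + 16 * n" by (simp add: algebra_simps power2_eq_square)
  finally have "2 * e * (2 * e + 4) \<le> 16 * n\<^sup>2 + 16 * n" .
  moreover have "n \<le> n\<^sup>2" "1 \<le> n\<^sup>2" using assms(1) by (simp_all add: power2_eq_square)
  ultimately show ?thesis by linarith
qed

theorem mainTheorem2:
  "\<exists>(C::nat) (N::nat). \<forall>X T0. phylo_tree X T0 \<and> card X \<ge> N \<longrightarrow>
     (\<exists>ws. nni_walk X ws \<and> length ws - 1 \<le> C * (card X)^2 \<and>
        (\<forall>T. spr X T0 T \<longrightarrow> (\<exists>W\<in>set ws. tree_iso X W T)))"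
proof (rule exI[of _ 40], rule exI[of _ 1], intro allI impI)
  fix X T0 assume a: "phylo_tree X T0 \<and> 1 \<le> card X"
  obtain V E where T0: "T0 = (V, E)" by (cases T0)
  have ph: "phylo_tree X (V, E)" using a T0 by simp
  obtain Ls where Ls: "nni_tour X (V, E) Ls" "length Ls \<le> 1 + 2 * card E * (2 * card E + 4)"
    "\<forall>T. spr_move X (V, E) T \<longrightarrow> T \<in> set Ls"
    using spr_tour[OF ph] by blast
  have "X \<noteq> {}" using a by auto
  then have "card E \<le> 2 * card X" using phylo_size_bounds(2)[OF ph] by blast
  then have len: "length Ls \<le> 40 * (card X)\<^sup>2" using Ls(2) quadratic_bound a by (meson order_trans)
  note walk = nni_tour_walk[OF Ls(1)]
  have "length (remdups_adj Ls) - 1 \<le> 40 * (card X)\<^sup>2" using len walk(3) by linarith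
  moreover have "\<exists>W\<in>set (remdups_adj Ls). tree_iso X W T" if "spr X T0 T" for T
    using that Ls(3) walk(2) unfolding spr_def T0 by blast
  ultimately show "\<exists>ws. nni_walk X ws \<and> length ws - 1 \<le> 40 * (card X)\<^sup>2 \<and>
      (\<forall>T. spr X T0 T \<longrightarrow> (\<exists>W\<in>set ws. tree_iso X W T))"
    using walk(1) by blast
qed

end
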